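(* Let $n>k$ be positive integers and $\ell$ an integer with $0\le\ell\le k-1$. Then $n_{\ge 0}(G(n,k,\{\ell\}))\le n$.
   Context: For positive integers $n>k$ and $L\subseteq\{0,1,\dots,k-1\}$, the generalized Johnson graph $G(n,k,L)$ has vertex set $\binom{[n]}{k}$, with $A,B$ adjacent if and only if $|A\cap B|\notin L$. A weighted adjacency matrix of a graph $G=(V,E)$ is a Hermitian matrix indexed by $V$ with $A_{ij}\neq0$ only if $ij\in E$. For a Hermitian matrix $X$, $n_{\ge0}(X)$ is its number of nonnegative eigenvalues (with multiplicity), and $n_{\ge0}(G)$ is the minimum of $n_{\ge0}(A)$ over all weighted adjacency matrices $A$ of $G$. *)

theory Defs
  imports "Jordan_Normal_Form.Char_Poly"
begin

definition johnson_vertices :: "nat \<Rightarrow> nat \<Rightarrow> nat set set" where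
  "johnson_vertices n k = {A. A \<subseteq> {1..n} \<and> card A = k}"

definition johnson_edge :: "nat \<Rightarrow> nat \<Rightarrow> nat set \<Rightarrow> nat set \<Rightarrow> nat set \<Rightarrow> bool" where
  "johnson_edge n k L A B \<longleftrightarrow>
     A \<in> johnson_vertices n k \<and> B \<in> johnson_vertices n k \<and> A \<noteq> B \<and> card (A \<inter> B) \<notin> L"

text \<open>A fixed enumeration of a finite vertex set, used to index matrices by vertices.
  (The spectrum does not depend on the enumeration.)\<close>
definition vertex_enum :: "'v set \<Rightarrow> 'v list" where
  "vertex_enum V = (SOME xs. distinct xs \<and> set xs = V)"

definition hermitian_mat :: "complex mat \<Rightarrow> bool" where
  "hermitian_mat M \<longleftrightarrow> dim_row M = dim_col M \<and>
     (\<forall>i < dim_row M. \<forall>j < dim_row M. M $$ (i, j) = cnj (M $$ (j, i)))"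

definition weighted_adj_matrix :: "'v set \<Rightarrow> ('v \<Rightarrow> 'v \<Rightarrow> bool) \<Rightarrow> complex mat \<Rightarrow> bool" where
  "weighted_adj_matrix V E M \<longleftrightarrow>
     M \<in> carrier_mat (card V) (card V) \<and> hermitian_mat M \<and>
     (\<forall>i < card V. \<forall>j < card V.
        M $$ (i, j) \<noteq> 0 \<longrightarrow> E (vertex_enum V ! i) (vertex_enum V ! j))"

definition n_nonneg :: "complex mat \<Rightarrow> nat" where
  "n_nonneg M = (\<Sum>x \<in> {x. poly (char_poly M) x = 0 \<and> x \<in> \<real> \<and> Re x \<ge> 0}.
                   order x (char_poly M))"

definition n_nonneg_graph :: "'v set \<Rightarrow> ('v \<Rightarrow> 'v \<Rightarrow> bool) \<Rightarrow> nat" where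
  "n_nonneg_graph V E = (LEAST m. \<exists>M. weighted_adj_matrix V E M \<and> n_nonneg M = m)"

end

theory Submission
  imports Defs
begin

(* Enumerate the vertices as S_1, ..., S_N and let A be the N x n incidence matrix,
   A_ai = [i in S_a], and B the n x N matrix with B_ib = [i in S_b] - l/k.  Then
   (AB)_ab = |S_a Int S_b| - l, so M = AB - (k - l) I vanishes on the diagonal and exactly
   off the edges of G(n,k,{l}): it is a weighted adjacency matrix.  Since
   x^n det (xI - AB) = x^N det (xI - BA), the eigenvalue 0 of AB has multiplicity at least
   N - n, and subtracting (k - l) I with k - l > 0 turns all of these into negative
   eigenvalues of M; hence at most n eigenvalues of M are nonnegative. *)

lemma det_smult_one_minus_mult_commute:
  fixes A :: "'a::idom mat"
  assumes A: "A \<in> carrier_mat N n" and B: "B \<in> carrier_mat n N"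
  shows "x ^ n * det (x \<cdot>\<^sub>m 1\<^sub>m N - A * B) = x ^ N * det (x \<cdot>\<^sub>m 1\<^sub>m n - B * A)"
proof -
  \<comment> \<open>Both sides equal x^n det K: L1 K and L2 K are block triangular and det L1 = det L2 = x^n.\<close>
  define K where "K = four_block_mat (x \<cdot>\<^sub>m 1\<^sub>m N) A B (1\<^sub>m n)"
  define L1 where "L1 = four_block_mat (1\<^sub>m N) (- A) (0\<^sub>m n N) (x \<cdot>\<^sub>m 1\<^sub>m n)"
  define L2 where "L2 = four_block_mat (1\<^sub>m N) (0\<^sub>m N n) (- B) (x \<cdot>\<^sub>m 1\<^sub>m n)"
  have K: "K \<in> carrier_mat (N + n) (N + n)" and L1: "L1 \<in> carrier_mat (N + n) (N + n)"
    and L2: "L2 \<in> carrier_mat (N + n) (N + n)"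
    using A B by (auto simp: K_def L1_def L2_def)
  have xB: "(x \<cdot>\<^sub>m 1\<^sub>m n) * B = x \<cdot>\<^sub>m B" "B * (x \<cdot>\<^sub>m 1\<^sub>m N) = x \<cdot>\<^sub>m B"
    using B by auto
  have "L1 * K = four_block_mat
      (1\<^sub>m N * (x \<cdot>\<^sub>m 1\<^sub>m N) + (- A) * B) (1\<^sub>m N * A + (- A) * 1\<^sub>m n)
      (0\<^sub>m n N * (x \<cdot>\<^sub>m 1\<^sub>m N) + (x \<cdot>\<^sub>m 1\<^sub>m n) * B) (0\<^sub>m n N * A + (x \<cdot>\<^sub>m 1\<^sub>m n) * 1\<^sub>m n)"
    unfolding L1_def K_def using A B by (intro mult_four_block_mat) auto
  also have "\<dots> = four_block_mat (x \<cdot>\<^sub>m 1\<^sub>m N - A * B) (0\<^sub>m N n) (x \<cdot>\<^sub>m B) (x \<cdot>\<^sub>m 1\<^sub>m n)"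
    using A B xB by (auto simp: minus_add_uminus_mat)
  finally have "det (L1 * K) = det (x \<cdot>\<^sub>m 1\<^sub>m N - A * B) * det (x \<cdot>\<^sub>m 1\<^sub>m n)"
    using A B by (simp only:) (rule det_four_block_mat_upper_right_zero, auto)
  moreover have "det L1 = x ^ n"
    unfolding L1_def using A by (subst det_four_block_mat_lower_left_zero) auto
  moreover have "L2 * K = four_block_mat
      (1\<^sub>m N * (x \<cdot>\<^sub>m 1\<^sub>m N) + 0\<^sub>m N n * B) (1\<^sub>m N * A + 0\<^sub>m N n * 1\<^sub>m n)
      ((- B) * (x \<cdot>\<^sub>m 1\<^sub>m N) + (x \<cdot>\<^sub>m 1\<^sub>m n) * B) ((- B) * A + (x \<cdot>\<^sub>m 1\<^sub>m n) * 1\<^sub>m n)"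
    unfolding L2_def K_def using A B by (intro mult_four_block_mat) auto
  then have "L2 * K = four_block_mat (x \<cdot>\<^sub>m 1\<^sub>m N) A (0\<^sub>m n N) (x \<cdot>\<^sub>m 1\<^sub>m n - B * A)"
    using A B xB by (auto simp: minus_add_uminus_mat)
  then have "det (L2 * K) = det (x \<cdot>\<^sub>m 1\<^sub>m N) * det (x \<cdot>\<^sub>m 1\<^sub>m n - B * A)"
    using A B by (simp only:) (rule det_four_block_mat_lower_left_zero, auto)
  moreover have "det L2 = x ^ n"
    unfolding L2_def using B by (subst det_four_block_mat_upper_right_zero) auto
  moreover have "det (x \<cdot>\<^sub>m 1\<^sub>m N) = x ^ N" "det (x \<cdot>\<^sub>m 1\<^sub>m n) = x ^ n" by simp_all
  ultimately show ?thesis using det_mult[OF L1 K] det_mult[OF L2 K] by (metis mult.commute)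
qed

lemma char_poly_eq_det:
  "char_poly A = det ([:0, 1:] \<cdot>\<^sub>m 1\<^sub>m (dim_row A) - map_mat (\<lambda>a. [:a:]) A)"
  unfolding char_poly_def char_poly_matrix_def by (rule arg_cong[where f = det], rule eq_matI) auto

lemma char_poly_mult_commute:
  fixes A :: "'a::idom mat"
  assumes A: "A \<in> carrier_mat N n" and B: "B \<in> carrier_mat n N"
  shows "monom 1 n * char_poly (A * B) = monom 1 N * char_poly (B * A)"
proof -
  have "[:0, 1:] ^ n * det ([:0, 1:] \<cdot>\<^sub>m 1\<^sub>m N - map_mat (\<lambda>a. [:a:]) A * map_mat (\<lambda>a. [:a:]) B)
    = [:0, 1:] ^ N * det ([:0, 1:] \<cdot>\<^sub>m 1\<^sub>m n - map_mat (\<lambda>a. [:a:]) B * map_mat (\<lambda>a. [:a:]) A)"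
    using A B by (intro det_smult_one_minus_mult_commute) auto
  then show ?thesis
    using A B by (simp add: char_poly_eq_det map_poly_mult(1)[OF A B] map_poly_mult(1)[OF B A]
        x_pow_n monom_altdef)
qed

lemma order_zero_char_poly_mult:
  fixes A :: "'a::idom mat"
  assumes A: "A \<in> carrier_mat N n" and B: "B \<in> carrier_mat n N"
  shows "N \<le> n + Polynomial.order 0 (char_poly (A * B))"
proof -
  have "char_poly (A * B) \<noteq> 0" "char_poly (B * A) \<noteq> 0"
    using degree_monic_char_poly[of "A * B" N] degree_monic_char_poly[of "B * A" n] A B by auto
  then have "n + Polynomial.order 0 (char_poly (A * B)) = N + Polynomial.order 0 (char_poly (B * A))"
    using arg_cong[OF char_poly_mult_commute[OF A B], of "Polynomial.order 0"]
    by (simp add: order_mult)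
  then show ?thesis by linarith
qed

lemma proots_linear_factors:
  "proots (\<Prod>a\<leftarrow>as. [:- a, 1:]) = mset (as :: 'a::idom list)"
proof (induction as)
  case (Cons a as)
  have "proots ([:- a, 1:] * (\<Prod>a\<leftarrow>as. [:- a, 1:])) = {#a#} + mset as"
    using Cons.IH by (subst proots_mult) (auto simp: prod_list_zero_iff)
  then show ?case by (simp del: mult_pCons_left)
qed simp

lemma order_linear_factors:
  "Polynomial.order x (\<Prod>a\<leftarrow>as. [:- a, 1:]) = count (mset as) (x :: 'a::idom)"
proof -
  have "(\<Prod>a\<leftarrow>as. [:- a, 1:]) \<noteq> 0" by (auto simp: prod_list_zero_iff)
  then show ?thesis by (metis count_proots proots_linear_factors)
qed

lemma n_nonneg_linear_factors:
  assumes "char_poly M = (\<Prod>a\<leftarrow>as. [:- a, 1:])"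
  shows "n_nonneg M = length (filter (\<lambda>a. a \<in> \<real> \<and> Re a \<ge> 0) as)"
proof -
  let ?X = "filter_mset (\<lambda>a. a \<in> \<real> \<and> Re a \<ge> 0) (mset as)"
  have nz: "char_poly M \<noteq> 0" using assms by (auto simp: prod_list_zero_iff)
  have proots: "proots (char_poly M) = mset as" using assms by (simp add: proots_linear_factors)
  have "n_nonneg M = (\<Sum>x \<in> set_mset ?X. count ?X x)"
    unfolding n_nonneg_def
    using nz count_proots[OF nz] set_count_proots[OF nz] proots by (intro sum.cong) auto
  also have "\<dots> = size ?X" by (rule size_multiset_overloaded_eq[symmetric])
  finally show ?thesis by (metis mset_filter size_mset)
qed

lemma poly_char_poly_minus_smult_one:
  fixes A :: "'a::field mat"
  assumes "A \<in> carrier_mat n n"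
  shows "poly (char_poly (A - c \<cdot>\<^sub>m 1\<^sub>m n)) x = poly (char_poly A) (x + c)"
proof -
  have "char_matrix (A - c \<cdot>\<^sub>m 1\<^sub>m n) x = char_matrix A (x + c)"
    using assms by (intro eq_matI) (auto simp: char_matrix_def algebra_simps)
  moreover have "A - c \<cdot>\<^sub>m 1\<^sub>m n \<in> carrier_mat n n" by (simp add: minus_carrier_mat)
  ultimately show ?thesis using assms by (simp add: char_poly_matrix)
qed

lemma n_nonneg_mult_minus_smult_one:
  fixes A :: "complex mat" and c :: real
  assumes A: "A \<in> carrier_mat N n" and B: "B \<in> carrier_mat n N" and "c > 0"
  shows "n_nonneg (A * B - of_real c \<cdot>\<^sub>m 1\<^sub>m N) \<le> n"
proof -
  let ?nonneg = "\<lambda>a. a \<in> \<real> \<and> Re a \<ge> 0"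
  have AB: "A * B \<in> carrier_mat N N" using A B by simp
  obtain es where es: "char_poly (A * B) = (\<Prod>e\<leftarrow>es. [:- e, 1:])" and "length es = N"
    using char_poly_factorized[OF AB] by blast
  have "poly (char_poly (A * B - of_real c \<cdot>\<^sub>m 1\<^sub>m N))
    = poly (\<Prod>a\<leftarrow>map (\<lambda>e. e - of_real c) es. [:- a, 1:])"
    by (rule ext) (simp add: poly_char_poly_minus_smult_one[OF AB] es poly_prod_list o_def algebra_simps)
  then have "n_nonneg (A * B - of_real c \<cdot>\<^sub>m 1\<^sub>m N)
    = length (filter ?nonneg (map (\<lambda>e. e - of_real c) es))"
    unfolding poly_eq_poly_eq_iff by (rule n_nonneg_linear_factors)
  also have "\<dots> = length (filter (\<lambda>e. ?nonneg (e - of_real c)) (filter (\<lambda>e. e \<noteq> 0) es))"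
    using \<open>c > 0\<close>
    by (auto simp: filter_map filter_filter o_def intro!: arg_cong[where f = length] filter_cong)
  also have "\<dots> \<le> length (filter (\<lambda>e. e \<noteq> 0) es)" by (rule length_filter_le)
  also have "\<dots> = N - count (mset es) 0"
    using sum_length_filter_compl[of "(=) 0" es] \<open>length es = N\<close>
    by (simp add: count_mset count_list_eq_length_filter eq_commute[of 0])
  also have "count (mset es) 0 = Polynomial.order 0 (char_poly (A * B))"
    by (simp add: es order_linear_factors)
  finally show ?thesis using order_zero_char_poly_mult[OF A B] by linarith
qed

lemma n_nonneg_graph_le:
  assumes "weighted_adj_matrix V E M"
  shows "n_nonneg_graph V E \<le> n_nonneg M"
  unfolding n_nonneg_graph_def by (rule Least_le) (use assms in blast)

lemma vertex_enum:
  assumes "finite V"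
  shows "distinct (vertex_enum V)" "set (vertex_enum V) = V" "length (vertex_enum V) = card V"
proof -
  have "distinct (vertex_enum V) \<and> set (vertex_enum V) = V"
    unfolding vertex_enum_def by (rule someI_ex) (use finite_distinct_list[OF assms] in blast)
  then show "distinct (vertex_enum V)" "set (vertex_enum V) = V" "length (vertex_enum V) = card V"
    using distinct_card by fastforce+
qed

lemma weighted_adj_matrix_mat:
  assumes "finite V"
    and herm: "\<And>u v. u \<in> V \<Longrightarrow> v \<in> V \<Longrightarrow> w u v = cnj (w v u)"
    and edge: "\<And>u v. u \<in> V \<Longrightarrow> v \<in> V \<Longrightarrow> w u v \<noteq> 0 \<Longrightarrow> E u v"
  shows "weighted_adj_matrix V E
    (mat (card V) (card V) (\<lambda>(i, j). w (vertex_enum V ! i) (vertex_enum V ! j)))"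
    (is "weighted_adj_matrix V E ?M")
proof -
  have mem: "vertex_enum V ! i \<in> V" if "i < card V" for i
    using nth_mem[of i "vertex_enum V"] that vertex_enum[OF \<open>finite V\<close>] by simp
  show ?thesis
    unfolding weighted_adj_matrix_def hermitian_mat_def
  proof (intro conjI allI impI)
    fix i j assume "i < dim_row ?M" "j < dim_row ?M"
    then show "?M $$ (i, j) = cnj (?M $$ (j, i))" by (auto intro!: herm mem)
  next
    fix i j assume "i < card V" "j < card V" "?M $$ (i, j) \<noteq> 0"
    then show "E (vertex_enum V ! i) (vertex_enum V ! j)" by (auto intro!: edge mem)
  qed simp_all
qed

lemma card_Suc_preimage:
  assumes "X \<subseteq> {1..n}"
  shows "card ({0..<n} \<inter> {i. Suc i \<in> X}) = card X"
proof (rule bij_betw_same_card)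
  show "bij_betw Suc ({0..<n} \<inter> {i. Suc i \<in> X}) X"
    using assms by (intro bij_betw_byWitness[where f' = "\<lambda>j. j - 1"]) (auto simp: subset_iff)
qed

lemma sum_of_bool_mult_of_bool_minus:
  fixes q :: "'a::comm_ring_1"
  assumes "S \<subseteq> {1..n}"
  shows "(\<Sum>i = 0..<n. of_bool (Suc i \<in> S) * (of_bool (Suc i \<in> T) - q))
    = of_nat (card (S \<inter> T)) - q * of_nat (card S)"
proof -
  have "S \<inter> T \<subseteq> {1..n}" using assms by auto
  moreover have "{0..<n} \<inter> {i. Suc i \<in> S} \<inter> {i. Suc i \<in> T}
    = {0..<n} \<inter> {i. Suc i \<in> S \<inter> T}" by auto
  ultimately show ?thesis
    using card_Suc_preimage[OF assms] card_Suc_preimage[of "S \<inter> T" n]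
    by (simp add: sum_subtractf mult.commute)
qed

definition johnson_weight :: "nat \<Rightarrow> nat set \<Rightarrow> nat set \<Rightarrow> complex" where
  "johnson_weight l S T = (if S = T then 0 else of_nat (card (S \<inter> T)) - of_nat l)"

lemma finite_johnson_vertices: "finite (johnson_vertices n k)"
  unfolding johnson_vertices_def by (rule finite_subset[of _ "Pow {1..n}"]) auto

lemma weighted_adj_matrix_johnson_weight:
  "weighted_adj_matrix (johnson_vertices n k) (johnson_edge n k {l})
    (mat (card (johnson_vertices n k)) (card (johnson_vertices n k))
      (\<lambda>(a, b). johnson_weight l (vertex_enum (johnson_vertices n k) ! a)
                                  (vertex_enum (johnson_vertices n k) ! b)))"
  by (rule weighted_adj_matrix_mat[OF finite_johnson_vertices])
    (auto simp: johnson_weight_def johnson_edge_def Int_commute split: if_splits)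

lemma n_nonneg_johnson_weight_mat:
  fixes Ss :: "nat set list"
  assumes "distinct Ss" and Ss: "\<And>S. S \<in> set Ss \<Longrightarrow> S \<subseteq> {1..n} \<and> card S = k"
    and "l < k"
  shows "n_nonneg (mat (length Ss) (length Ss) (\<lambda>(a, b). johnson_weight l (Ss ! a) (Ss ! b)))
    \<le> n"
proof -
  let ?N = "length Ss"
  \<comment> \<open>Column i stands for the element Suc i of {1..n}.\<close>
  define A :: "complex mat" where "A = mat ?N n (\<lambda>(a, i). of_bool (Suc i \<in> Ss ! a))"
  define B :: "complex mat" where
    "B = mat n ?N (\<lambda>(i, b). of_bool (Suc i \<in> Ss ! b) - of_nat l / of_nat k)"
  have "mat ?N ?N (\<lambda>(a, b). johnson_weight l (Ss ! a) (Ss ! b))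
    = A * B - of_real (real (k - l)) \<cdot>\<^sub>m 1\<^sub>m ?N"
  proof (rule eq_matI)
    fix a b assume "a < dim_row (A * B - of_real (real (k - l)) \<cdot>\<^sub>m 1\<^sub>m ?N)"
      "b < dim_col (A * B - of_real (real (k - l)) \<cdot>\<^sub>m 1\<^sub>m ?N)"
    then have ab: "a < ?N" "b < ?N" by (auto simp: A_def B_def)
    then have "(A * B) $$ (a, b)
      = (\<Sum>i = 0..<n.
          of_bool (Suc i \<in> Ss ! a) * (of_bool (Suc i \<in> Ss ! b) - of_nat l / of_nat k))"
      by (simp add: A_def B_def scalar_prod_def
          del: sum_of_bool_eq sum_of_bool_mult_eq sum_mult_of_bool_eq)
    also have "\<dots> = of_nat (card (Ss ! a \<inter> Ss ! b)) - of_nat l"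
      using Ss[OF nth_mem[OF ab(1)]] \<open>l < k\<close> by (subst sum_of_bool_mult_of_bool_minus) simp_all
    finally show "mat ?N ?N (\<lambda>(a, b). johnson_weight l (Ss ! a) (Ss ! b)) $$ (a, b)
      = (A * B - of_real (real (k - l)) \<cdot>\<^sub>m 1\<^sub>m ?N) $$ (a, b)"
      using ab Ss[OF nth_mem[OF ab(1)]] nth_eq_iff_index_eq[OF \<open>distinct Ss\<close> ab] \<open>l < k\<close>
      by (cases "a = b") (simp_all add: johnson_weight_def A_def B_def of_nat_diff)
  qed (auto simp: A_def B_def)
  also have "n_nonneg (A * B - of_real (real (k - l)) \<cdot>\<^sub>m 1\<^sub>m ?N) \<le> n"
    using \<open>l < k\<close> by (intro n_nonneg_mult_minus_smult_one) (auto simp: A_def B_def)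
  finally show ?thesis .
qed

theorem proposition3p4:
  fixes n k l :: nat
  assumes "0 < k" and "k < n" and "l \<le> k - 1"
  shows "n_nonneg_graph (johnson_vertices n k) (johnson_edge n k {l}) \<le> n"
proof -
  let ?V = "johnson_vertices n k"
  note enum = vertex_enum[OF finite_johnson_vertices]
  have "S \<subseteq> {1..n} \<and> card S = k" if "S \<in> set (vertex_enum ?V)" for S
    using that[unfolded enum(2)] by (simp add: johnson_vertices_def)
  moreover have "l < k" using assms by simp
  ultimately have "n_nonneg (mat (card ?V) (card ?V)
      (\<lambda>(a, b). johnson_weight l (vertex_enum ?V ! a) (vertex_enum ?V ! b))) \<le> n"
    using n_nonneg_johnson_weight_mat[OF enum(1)] unfolding enum(3) by blast
  then show ?thesis
    using n_nonneg_graph_le[OF weighted_adj_matrix_johnson_weight] by (rule order.trans[rotated])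
qed

end
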